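(* Let $A,C,\varepsilon_g$ be positive constants with $\varepsilon_g<1/2$, and let $r>0$ be a fixed constant. For $N$ sufficiently large the following holds: whenever $x<y$ are in $I_W$ with $|x-y|\ge N^{\varepsilon_g}$, there do not exist real numbers $D_1,D_2,D_3,D_4$ with $r^2\le D_1^2+D_2^2+D_3^2+D_4^2\le N^{A}$ such that \[\sum_{i=1}^n\|D_1b_i(x)+D_2c_i(x)+D_3b_i(y)+D_4c_i(y)\|_{\mathbb R/\mathbb Z}^2\le C\log N.\]
   Context: Let $0<c_1<c_2$ be constants, $n$ a large integer and $M$ a large parameter (possibly growing with $n$) with $I_W:=[c_1M,c_2M]\subset[0,\sqrt n-M]$; set $N:=M$. For $x>0$ and $1\le i\le n$ let $b_i(x)=\sqrt N\,e^{-x^2/2}\,x^i/\sqrt{i!}$ and $c_i(x)=b_i'(x)=\sqrt N\,e^{-x^2/2}\,\frac{i-x^2}{x}\,\frac{x^i}{\sqrt{i!}}$. For $t\in\mathbb R$, $\|t\|_{\mathbb R/\mathbb Z}$ denotes the distance from $t$ to the nearest integer. *)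

theory Defs
  imports Complex_Main
begin

definition dist_Z :: "real \<Rightarrow> real" where
  "dist_Z t = \<bar>t - of_int (round t)\<bar>"

definition bfun :: "real \<Rightarrow> nat \<Rightarrow> real \<Rightarrow> real" where
  "bfun N i x = sqrt N * exp (- (x^2) / 2) * x ^ i / sqrt (fact i)"

definition cfun :: "real \<Rightarrow> nat \<Rightarrow> real \<Rightarrow> real" where
  "cfun N i x = sqrt N * exp (- (x^2) / 2) * ((real i - x^2) / x) * x ^ i / sqrt (fact i)"

end

theory Submission
  imports Defs "HOL-Real_Asymp.Real_Asymp"
begin

text \<open>The terms \<open>bfun N i z\<close> are \<open>sqrt N\<close> times square roots of Poisson(\<open>z\<^sup>2\<close>) probabilities, and
  \<open>cfun N i z = bfun N i z * (i - z\<^sup>2) / z\<close>. Let \<open>z\<close> be the one of \<open>x, y\<close> whose coefficient pair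
  \<open>(D, D')\<close> has the larger \<open>|D| + |D'|\<close>, and \<open>w\<close> the other one. On the side of \<open>z\<^sup>2\<close> away from \<open>w\<^sup>2\<close>
  the terms at \<open>w\<close> carry the factor \<open>exp (- (z - w)\<^sup>2 / 2)\<close>, negligible because
  \<open>|x - y| \<ge> N powr eps_g\<close>. So along a window of about \<open>3 N\<^sup>1\<^sup>/\<^sup>4 z\<close> indices ending at \<open>z\<^sup>2\<close> the
  summand is, up to a tiny error, a slowly varying positive weight times the affine function
  \<open>D + D' (i - z\<^sup>2) / z\<close>: it is below \<open>1/4\<close> at the far end of the window, and at least a fixed
  \<open>2 \<delta> > 0\<close> on about \<open>z / 8\<close> indices near \<open>z\<^sup>2\<close>, where the weights are of size \<open>z\<^sup>-\<^sup>1\<^sup>/\<^sup>2\<close>. As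
  \<open>dist_Z t = |t|\<close> for \<open>|t| \<le> 1/2\<close>, either these indices contribute \<open>\<delta>\<^sup>2\<close> each, or the summand
  climbs from below \<open>1/4\<close> to above \<open>1/2\<close>. Since the weight changes by at most a factor \<open>2\<close> over
  \<open>m \<approx> C log N\<close> steps and an affine function is small only on a short interval, at least
  \<open>3 m / 4 - 1\<close> of these steps land in \<open>[1/128, 1/2]\<close>. Either way the sum exceeds \<open>C log N\<close>.\<close>

section \<open>Poisson weights\<close>

text \<open>\<open>exp (2 * log_weight z i)\<close> is the Poisson(\<open>z\<^sup>2\<close>) probability of \<open>i\<close>; its mode is near \<open>z\<^sup>2\<close>.\<close>
definition log_weight :: "real \<Rightarrow> nat \<Rightarrow> real" where
  "log_weight z i = real i * ln z - z\<^sup>2 / 2 - ln (fact i) / 2"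

lemma bfun_eq_exp_log_weight:
  assumes "0 < z"
  shows "bfun N i z = sqrt N * exp (log_weight z i)"
proof -
  have "log_weight z i = (real i * ln z + - z\<^sup>2 / 2) - ln (fact i) / 2"
    by (simp add: log_weight_def)
  then have "exp (log_weight z i) = exp (real i * ln z) * exp (- z\<^sup>2 / 2) / exp (ln (fact i) / 2)"
    by (simp only: exp_diff exp_add)
  also have "exp (real i * ln z) = z ^ i"
    using assms by (simp add: exp_of_nat_mult)
  also have "exp (ln (fact i) / 2) = sqrt (fact i)"
    by (simp add: powr_half_sqrt[symmetric] powr_def)
  finally show ?thesis
    unfolding bfun_def by simp
qed

lemma cfun_eq_bfun: "cfun N i z = bfun N i z * ((real i - z\<^sup>2) / z)"
  unfolding cfun_def bfun_def by (simp add: field_simps)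

lemma power_div_fact_le_exp:
  fixes t :: real
  assumes "0 \<le> t"
  shows "t ^ n / fact n \<le> exp t"
proof -
  have sums: "(\<lambda>k. t ^ k /\<^sub>R fact k) sums exp t"
    by (rule exp_converges)
  have "t ^ n / fact n = t ^ n /\<^sub>R fact n"
    by (simp add: divide_simps)
  also have "\<dots> \<le> (\<Sum>k<Suc n. t ^ k /\<^sub>R fact k)"
    using assms by (intro member_le_sum) auto
  also have "\<dots> \<le> (\<Sum>k. t ^ k /\<^sub>R fact k)"
    by (rule sum_le_suminf[OF sums_summable[OF sums]]) (use assms in auto)
  also have "\<dots> = exp t"
    using sums_unique[OF sums] by simp
  finally show ?thesis .
qed

lemma log_weight_nonpos:
  assumes "0 < z"
  shows "log_weight z i \<le> 0"
proof -
  have "ln ((z\<^sup>2) ^ i / fact i) \<le> ln (exp (z\<^sup>2))"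
    using assms power_div_fact_le_exp[of "z\<^sup>2" i] by (intro ln_mono) auto
  moreover have "ln ((z\<^sup>2) ^ i / fact i) = 2 * real i * ln z - ln (fact i)"
    using assms by (simp add: ln_div ln_realpow)
  ultimately show ?thesis
    unfolding log_weight_def by simp
qed

lemma log_weight_Suc:
  assumes "0 < z"
  shows "log_weight z (Suc k) - log_weight z k = - ln (real (Suc k) / z\<^sup>2) / 2"
proof -
  have "ln (fact (Suc k) :: real) = ln (real (Suc k)) + ln (fact k)"
    by (simp add: ln_mult del: of_nat_Suc)
  then show ?thesis
    using assms unfolding log_weight_def by (simp add: ln_div ln_realpow algebra_simps)
qed

lemma abs_ln_div_le:
  fixes a b :: real
  assumes "0 < a" "0 < b"
  shows "\<bar>ln (a / b)\<bar> \<le> \<bar>a - b\<bar> / min a b"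
proof (cases "a \<le> b")
  case True
  have "ln (b / a) \<le> b / a - 1"
    using assms by (intro ln_le_minus_one) simp
  then show ?thesis
    using True assms by (simp add: ln_div diff_divide_distrib abs_if min_def)
next
  case False
  have "ln (a / b) \<le> a / b - 1"
    using assms by (intro ln_le_minus_one) simp
  then show ?thesis
    using False assms by (simp add: ln_div diff_divide_distrib abs_if min_def)
qed

lemma abs_log_weight_Suc_diff_le:
  assumes z: "0 < z" and near: "\<bar>real (Suc k) - z\<^sup>2\<bar> \<le> d" "2 * d \<le> z\<^sup>2"
  shows "\<bar>log_weight z (Suc k) - log_weight z k\<bar> \<le> d / z\<^sup>2"
proof -
  have min: "z\<^sup>2 / 2 \<le> min (real (Suc k)) (z\<^sup>2)"
    using near z by (auto simp: abs_le_iff min_def)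
  have "\<bar>log_weight z (Suc k) - log_weight z k\<bar> \<le> \<bar>real (Suc k) - z\<^sup>2\<bar> / min (real (Suc k)) (z\<^sup>2) / 2"
    using abs_ln_div_le[of "real (Suc k)" "z\<^sup>2"] z by (simp add: log_weight_Suc del: of_nat_Suc)
  also have "\<dots> \<le> d / (z\<^sup>2 / 2) / 2"
    using near min z by (intro divide_right_mono frac_le) auto
  finally show ?thesis
    by simp
qed

lemma abs_log_weight_diff_le_of_adjacent:
  assumes z: "0 < z" and adjacent: "\<bar>real a - real b\<bar> = 1"
    and near: "\<bar>real a - z\<^sup>2\<bar> \<le> d" "\<bar>real b - z\<^sup>2\<bar> \<le> d" "2 * d \<le> z\<^sup>2"
  shows "\<bar>log_weight z a - log_weight z b\<bar> \<le> d / z\<^sup>2"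
proof -
  have "real a = real (Suc b) \<or> real b = real (Suc a)"
    using adjacent by (auto simp: abs_if split: if_splits)
  then have "a = Suc b \<or> b = Suc a"
    by (simp only: of_nat_eq_iff)
  then show ?thesis
    using abs_log_weight_Suc_diff_le[OF z] near by (auto simp: abs_minus_commute)
qed

lemma diff_le_of_Suc_diff_le:
  fixes f :: "nat \<Rightarrow> real"
  assumes "j \<le> i" and "\<And>k. j \<le> k \<Longrightarrow> k < i \<Longrightarrow> f (Suc k) - f k \<le> c"
  shows "f i - f j \<le> real (i - j) * c"
  using assms
proof (induction i rule: dec_induct)
  case (step k)
  then have "f (Suc k) - f k \<le> c" and "f k - f j \<le> real (k - j) * c"
    by auto
  moreover have "real (Suc k - j) = real (k - j) + 1"
    using step.hyps by simp
  ultimately show ?case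
    by (simp add: algebra_simps)
qed simp

text \<open>Gaussian decay of the Poisson weights: each of the \<open>s\<close> steps from \<open>i\<close> towards the mode gains at
  least \<open>s / (2 z\<^sup>2)\<close> in \<open>log_weight\<close> (resp. \<open>s / (2 (z\<^sup>2 + s))\<close> above the mode), and the weights
  never exceed \<open>1\<close>.\<close>
lemma log_weight_tail_below:
  assumes z: "0 < z" and below: "real i + 2 * real s \<le> z\<^sup>2"
  shows "log_weight z i \<le> - (real s)\<^sup>2 / (2 * z\<^sup>2)"
proof -
  have "- log_weight z (i + s) - - log_weight z i \<le> real (i + s - i) * - (real s / (2 * z\<^sup>2))"
  proof (rule diff_le_of_Suc_diff_le[where f = "\<lambda>k. - log_weight z k"])
    fix k assume "i \<le> k" "k < i + s"
    then have "real s / z\<^sup>2 \<le> (z\<^sup>2 - real (Suc k)) / z\<^sup>2"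
      using below z by (intro divide_right_mono) auto
    moreover have "1 - real (Suc k) / z\<^sup>2 \<le> - ln (real (Suc k) / z\<^sup>2)"
      using ln_le_minus_one[of "real (Suc k) / z\<^sup>2"] z by simp
    ultimately show "- log_weight z (Suc k) - - log_weight z k \<le> - (real s / (2 * z\<^sup>2))"
      using log_weight_Suc[OF z, of k] z by (simp add: diff_divide_distrib del: of_nat_Suc)
  qed simp
  then show ?thesis
    using log_weight_nonpos[OF z, of "i + s"] by (simp add: power2_eq_square)
qed

lemma log_weight_tail_above:
  assumes z: "0 < z" and above: "z\<^sup>2 + 2 * real s \<le> real i"
  shows "log_weight z i \<le> - (real s)\<^sup>2 / (2 * (z\<^sup>2 + real s))"
proof -
  have si: "s \<le> i"
    using above zero_le_power2[of z] of_nat_le_iff[of s i] by linarith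
  have zs: "0 < z\<^sup>2 + real s"
    using z by (simp add: add_pos_nonneg)
  have "log_weight z i - log_weight z (i - s) \<le> real (i - (i - s)) * (- (real s / (z\<^sup>2 + real s)) / 2)"
  proof (rule diff_le_of_Suc_diff_le[where f = "log_weight z"])
    fix k assume k: "i - s \<le> k" "k < i"
    then have "z\<^sup>2 / real (Suc k) \<le> z\<^sup>2 / (z\<^sup>2 + real s)"
      using si above zs by (intro divide_left_mono) (auto simp: of_nat_diff)
    also have "\<dots> = 1 - real s / (z\<^sup>2 + real s)"
      using zs by (simp add: field_simps)
    finally have "real s / (z\<^sup>2 + real s) \<le> 1 - z\<^sup>2 / real (Suc k)"
      by simp
    also have "\<dots> \<le> ln (real (Suc k) / z\<^sup>2)"
      using ln_le_minus_one[of "z\<^sup>2 / real (Suc k)"] z by (simp add: ln_div)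
    finally show "log_weight z (Suc k) - log_weight z k \<le> - (real s / (z\<^sup>2 + real s)) / 2"
      unfolding log_weight_Suc[OF z] by (intro divide_right_mono) auto
  qed (use si in simp)
  then show ?thesis
    using log_weight_nonpos[OF z, of "i - s"] si by (simp add: power2_eq_square algebra_simps)
qed

lemma log_weight_tail:
  assumes z: "0 < z" and t: "0 \<le> t" "t + 1 \<le> z\<^sup>2" and far: "2 * t + 2 \<le> \<bar>real i - z\<^sup>2\<bar>"
  shows "log_weight z i \<le> - t\<^sup>2 / (4 * z\<^sup>2)"
proof -
  define s where "s = nat \<lceil>t\<rceil>"
  have s: "t \<le> real s" "real s \<le> t + 1"
    using t unfolding s_def by linarith+
  have "t\<^sup>2 / (2 * (z\<^sup>2 + z\<^sup>2)) \<le> (real s)\<^sup>2 / (2 * (z\<^sup>2 + real s))"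
    using s t z by (intro frac_le power_mono) auto
  moreover have "(real s)\<^sup>2 / (2 * (z\<^sup>2 + real s)) \<le> (real s)\<^sup>2 / (2 * z\<^sup>2)"
    using z by (intro divide_left_mono) (auto intro!: mult_pos_pos add_pos_nonneg)
  moreover have "real i + 2 * real s \<le> z\<^sup>2 \<or> z\<^sup>2 + 2 * real s \<le> real i"
    using far s by (auto simp: abs_if split: if_splits)
  then have "log_weight z i \<le> - (real s)\<^sup>2 / (2 * z\<^sup>2) \<or> log_weight z i \<le> - (real s)\<^sup>2 / (2 * (z\<^sup>2 + real s))"
    using log_weight_tail_below[OF z, of i s] log_weight_tail_above[OF z, of s i] by blast
  ultimately show ?thesis
    by (auto simp: field_simps)
qed

lemma log_weight_shift_le:
  assumes x: "0 < x" and y: "0 < y" and side: "(y - x) * (real i - x\<^sup>2) \<le> 0"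
  shows "log_weight y i \<le> log_weight x i - (y - x)\<^sup>2 / 2"
proof -
  have "(real i - x\<^sup>2) * ln (y / x) \<le> 0"
    using side x y by (cases "x \<le> y") (auto simp: mult_le_0_iff zero_le_mult_iff)
  moreover have "x\<^sup>2 * ln (y / x) \<le> x\<^sup>2 * (y / x - 1)"
    using x y by (intro mult_left_mono ln_le_minus_one) auto
  moreover have "x\<^sup>2 * (y / x - 1) = x * y - x\<^sup>2"
    using x by (simp add: field_simps power2_eq_square)
  ultimately have "real i * ln (y / x) \<le> x * y - x\<^sup>2"
    by (simp add: algebra_simps)
  moreover have "log_weight y i - log_weight x i = real i * ln (y / x) - (y\<^sup>2 - x\<^sup>2) / 2"
    using x y by (simp add: log_weight_def ln_div field_simps)
  moreover have "(y - x)\<^sup>2 = y\<^sup>2 - 2 * (x * y) + x\<^sup>2"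
    by (simp add: power2_eq_square algebra_simps)
  ultimately show ?thesis
    by (simp add: field_simps)
qed

lemma ln_one_plus_lower_bound:
  fixes t :: real
  assumes "0 \<le> t"
  shows "2 * t / (2 + t) \<le> ln (1 + t)"
proof -
  let ?f = "\<lambda>t::real. ln (1 + t) - 2 * t / (2 + t)"
  have "?f 0 \<le> ?f t"
  proof (rule DERIV_nonneg_imp_nondecreasing[OF assms])
    fix s :: real assume s: "0 \<le> s" "s \<le> t"
    have "(?f has_real_derivative 1 / (1 + s) - 4 / (2 + s)\<^sup>2) (at s)"
      using s by (auto intro!: derivative_eq_intros simp: field_simps power2_eq_square)
    moreover have "1 / (1 + s) - 4 / (2 + s)\<^sup>2 = s\<^sup>2 / ((1 + s) * (2 + s)\<^sup>2)"
      using s by (simp add: divide_simps) (simp add: algebra_simps power2_eq_square)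
    ultimately show "\<exists>d. (?f has_real_derivative d) (at s) \<and> 0 \<le> d"
      using s by auto
  qed
  then show ?thesis by simp
qed

lemma ln_fact_le:
  assumes "1 \<le> n"
  shows "ln (fact n :: real) \<le> 1 + (real n + 1/2) * ln (real n) - real n"
  using assms
proof (induction n rule: dec_induct)
  case (step k)
  have k: "1 \<le> real k"
    using step.hyps by simp
  have "1 / (real k + 1/2) = 2 * (1 / real k) / (2 + 1 / real k)"
    using k by (simp add: field_simps)
  also have "\<dots> \<le> ln (1 + 1 / real k)"
    by (rule ln_one_plus_lower_bound) simp
  also have "1 + 1 / real k = real (Suc k) / real k"
    using k by (simp add: field_simps)
  also have "ln (real (Suc k) / real k) = ln (real (Suc k)) - ln (real k)"
    using k by (simp add: ln_div)
  finally have "1 \<le> (real k + 1/2) * (ln (real (Suc k)) - ln (real k))"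
    using k by (simp add: field_simps)
  moreover have "ln (fact (Suc k) :: real) = ln (real (Suc k)) + ln (fact k)"
    by (simp add: ln_mult del: of_nat_Suc)
  ultimately show ?case
    using step.IH by (simp add: algebra_simps)
qed simp

text \<open>Stirling's upper bound for \<open>i!\<close>, combined with \<open>ln t \<le> t - 1\<close> at \<open>t = i / z\<^sup>2\<close>.\<close>
lemma exp_log_weight_near_mode:
  assumes z: "1 \<le> z" and i: "1 \<le> i" and near: "\<bar>real i - z\<^sup>2\<bar> \<le> z"
  shows "exp (-1) / sqrt (2 * z) \<le> exp (log_weight z i)"
proof -
  have ri: "1 \<le> real i"
    using i by simp
  have "real i * ln (real i / z\<^sup>2) \<le> real i * (real i / z\<^sup>2 - 1)"
    using ri z by (intro mult_left_mono ln_le_minus_one) auto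
  also have "\<dots> = real i - z\<^sup>2 + (real i - z\<^sup>2)\<^sup>2 / z\<^sup>2"
    using z by (simp add: field_simps power2_eq_square)
  also have "\<dots> \<le> real i - z\<^sup>2 + 1"
    using near z abs_le_square_iff[of "real i - z\<^sup>2" z] by simp
  finally have quad: "real i * (ln (real i) - 2 * ln z) \<le> real i - z\<^sup>2 + 1"
    using ri z by (simp add: ln_div ln_realpow)
  have "z * 1 \<le> z * z"
    using z by (intro mult_left_mono) auto
  moreover have "real i \<le> z\<^sup>2 + z"
    using abs_le_D1[OF near] by simp
  ultimately have "real i \<le> (2 * z)\<^sup>2"
    by (simp add: power_mult_distrib power2_eq_square)
  then have "ln (real i) \<le> ln ((2 * z)\<^sup>2)"
    using ri by (intro ln_mono) auto
  also have "\<dots> = 2 * ln (2 * z)"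
    using ln_realpow[of "2 * z" 2] z by simp
  finally have "ln (real i) \<le> 2 * ln (2 * z)" .
  then have "- 1 - ln (2 * z) / 2 \<le> log_weight z i"
    using ln_fact_le[OF i] quad unfolding log_weight_def by (simp add: algebra_simps)
  then have "exp (- 1 - ln (2 * z) / 2) \<le> exp (log_weight z i)"
    by simp
  moreover have "exp (- 1 - ln (2 * z) / 2) = exp (-1) / sqrt (2 * z)"
    using z by (simp add: exp_diff powr_half_sqrt[symmetric] powr_def)
  ultimately show ?thesis by simp
qed

section \<open>Distance to the integers along an approximately affine sequence\<close>

lemma abs_le_dist_Z:
  assumes "\<bar>v\<bar> \<le> 1/2"
  shows "\<bar>v\<bar> \<le> dist_Z v"
proof (cases "round v = 0")
  case False
  then have "1 \<le> \<bar>real_of_int (round v)\<bar>"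
    by linarith
  then show ?thesis
    unfolding dist_Z_def using assms by linarith
qed (simp add: dist_Z_def)

lemma card_le_of_abs_diff_less:
  fixes S :: "nat set"
  assumes "finite S" and close: "\<And>j. j \<in> S \<Longrightarrow> \<bar>real j - c\<bar> < h" and "0 \<le> h"
  shows "real (card S) \<le> 2 * h + 1"
proof (cases "S = {}")
  case False
  have "S \<subseteq> {Min S..Max S}"
    using assms(1) by auto
  then have "card S \<le> Max S + 1 - Min S"
    using card_mono[of "{Min S..Max S}" S] by simp
  moreover have "Min S \<le> Max S"
    using False assms(1) by simp
  ultimately have "real (card S) \<le> real (Max S) + 1 - real (Min S)"
    by (simp add: of_nat_diff)
  moreover have "real (Max S) - real (Min S) < 2 * h"
    using close[of "Min S"] close[of "Max S"] False assms(1) by simp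
  ultimately show ?thesis
    by linarith
qed (use assms in simp)

text \<open>An affine function is smaller than \<open>\<epsilon>\<close> only on an interval of length \<open>2 \<epsilon> / |\<beta>|\<close> around
  its zero, and nowhere on \<open>[1, m]\<close> if its slope is too small to get there from \<open>|a| \<ge> 9 \<epsilon>\<close>.\<close>
lemma card_affine_small_le:
  fixes a \<beta> \<epsilon> :: real
  assumes "0 < \<epsilon>" and a: "9 * \<epsilon> \<le> \<bar>a\<bar>"
  shows "real (card {j \<in> {1..m}. \<bar>a - \<beta> * real j\<bar> < \<epsilon>}) \<le> real m / 4 + 1"
proof (cases "real m * \<bar>\<beta>\<bar> \<le> 8 * \<epsilon>")
  case True
  have "\<epsilon> \<le> \<bar>a - \<beta> * real j\<bar>" if "j \<le> m" for j
  proof -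
    have "\<bar>\<beta>\<bar> * real j \<le> real m * \<bar>\<beta>\<bar>"
      using that by (simp add: mult.commute mult_left_mono)
    then show ?thesis
      using a True abs_triangle_ineq2[of a "\<beta> * real j"] by (simp add: abs_mult)
  qed
  then have "{j \<in> {1..m}. \<bar>a - \<beta> * real j\<bar> < \<epsilon>} = {}"
    by (auto simp: not_less[symmetric])
  then show ?thesis
    by (simp only: card.empty of_nat_0)
next
  case False
  then have \<beta>: "0 < \<bar>\<beta>\<bar>"
    using assms by auto
  have "real (card {j \<in> {1..m}. \<bar>a - \<beta> * real j\<bar> < \<epsilon>}) \<le> 2 * (\<epsilon> / \<bar>\<beta>\<bar>) + 1"
  proof (rule card_le_of_abs_diff_less[where c = "a / \<beta>"])
    fix j assume "j \<in> {j \<in> {1..m}. \<bar>a - \<beta> * real j\<bar> < \<epsilon>}"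
    moreover have "\<bar>a - \<beta> * real j\<bar> = \<bar>\<beta>\<bar> * \<bar>real j - a / \<beta>\<bar>"
      using \<beta> by (simp add: abs_mult[symmetric] algebra_simps)
    ultimately show "\<bar>real j - a / \<beta>\<bar> < \<epsilon> / \<bar>\<beta>\<bar>"
      using \<beta> by (simp add: field_simps)
  qed (use \<beta> assms in auto)
  moreover have "2 * (\<epsilon> / \<bar>\<beta>\<bar>) \<le> real m / 4"
    using False \<beta> by (simp add: field_simps)
  ultimately show ?thesis
    by linarith
qed

lemma card_affine_large_ge:
  fixes a \<beta> \<epsilon> :: real
  assumes "0 < \<epsilon>" and "9 * \<epsilon> \<le> \<bar>a\<bar>"
  shows "3/4 * real m - 1 \<le> real (card {j \<in> {1..m}. \<epsilon> \<le> \<bar>a - \<beta> * real j\<bar>})"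
proof -
  have "{j \<in> {1..m}. \<epsilon> \<le> \<bar>a - \<beta> * real j\<bar>} \<union> {j \<in> {1..m}. \<bar>a - \<beta> * real j\<bar> < \<epsilon>} = {1..m}"
    by auto
  then have "m = card ({j \<in> {1..m}. \<epsilon> \<le> \<bar>a - \<beta> * real j\<bar>} \<union> {j \<in> {1..m}. \<bar>a - \<beta> * real j\<bar> < \<epsilon>})"
    by simp
  also have "\<dots> \<le> card {j \<in> {1..m}. \<epsilon> \<le> \<bar>a - \<beta> * real j\<bar>} + card {j \<in> {1..m}. \<bar>a - \<beta> * real j\<bar> < \<epsilon>}"
    by (rule card_Un_le)
  finally show ?thesis
    using card_affine_small_le[OF assms, of m \<beta>] by linarith
qed

lemma abs_bounds_of_abs_diff_le:
  fixes v E x \<tau> :: real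
  assumes "\<bar>v - E * x\<bar> \<le> \<tau>" "0 \<le> E"
  shows "\<bar>v\<bar> \<le> E * \<bar>x\<bar> + \<tau>" "E * \<bar>x\<bar> \<le> \<bar>v\<bar> + \<tau>"
proof -
  have "\<bar>E * x\<bar> = E * \<bar>x\<bar>"
    using assms(2) by (simp add: abs_mult)
  then show "\<bar>v\<bar> \<le> E * \<bar>x\<bar> + \<tau>" "E * \<bar>x\<bar> \<le> \<bar>v\<bar> + \<tau>"
    using assms(1) by argo+
qed

lemma exp_half_le_of_steps:
  fixes g :: "nat \<Rightarrow> real"
  assumes step: "\<And>k. k < K \<Longrightarrow> g (Suc k) - g k \<le> \<eta>"
    and k: "k \<le> k1" "k1 \<le> K" "real (k1 - k) * \<eta> \<le> 1/2"
  shows "exp (g k1) / 2 \<le> exp (g k)"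
proof -
  have "g k1 - g k \<le> real (k1 - k) * \<eta>"
    using step k by (intro diff_le_of_Suc_diff_le) auto
  then have "exp (-1/2) * exp (g k1) \<le> exp (g k)"
    using k by (simp flip: exp_add)
  moreover have "1/2 * exp (g k1) \<le> exp (-1/2) * exp (g k1)"
    using exp_ge_add_one_self[of "-1/2::real"] by (intro mult_right_mono) auto
  ultimately show ?thesis
    by linarith
qed

text \<open>In the \<open>m\<close> steps before the sequence first exceeds \<open>1/2\<close> the weight stays within a factor
  \<open>2\<close> of its value there, and the affine factor is small at most \<open>m/4 + 1\<close> times.\<close>
lemma many_moderate_values:
  fixes v g :: "nat \<Rightarrow> real" and \<alpha> \<beta> \<tau> \<eta> :: real and m K :: nat
  assumes approx: "\<And>k. k \<le> K \<Longrightarrow> \<bar>v k - exp (g k) * (\<alpha> + \<beta> * real k)\<bar> \<le> \<tau>"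
    and \<tau>: "\<tau> \<le> 1/128"
    and step: "\<And>k. k < K \<Longrightarrow> g (Suc k) - g k \<le> \<eta>"
    and \<eta>: "0 \<le> \<eta>" "real m * \<eta> \<le> 1/2"
    and start: "\<And>k. k \<le> m \<Longrightarrow> \<bar>v k\<bar> \<le> 1/4"
    and large: "1/2 < \<bar>v K\<bar>"
  obtains G where "G \<subseteq> {..<K}" "3/4 * real m - 1 \<le> real (card G)"
    "\<And>k. k \<in> G \<Longrightarrow> 1/128 \<le> \<bar>v k\<bar> \<and> \<bar>v k\<bar> \<le> 1/2"
proof -
  define k1 where "k1 = (LEAST k. 1/2 < \<bar>v k\<bar>)"
  have k1_large: "1/2 < \<bar>v k1\<bar>" and k1K: "k1 \<le> K"
    unfolding k1_def using large by (auto intro: LeastI Least_le)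
  have before_k1: "\<bar>v k\<bar> \<le> 1/2" if "k < k1" for k
    using not_less_Least[OF that[unfolded k1_def]] by simp
  have mk1: "m < k1"
    using start[of k1] k1_large by force
  define E where "E = exp (g k1)"
  define a where "a = \<alpha> + \<beta> * real k1"
  have E: "0 < E"
    by (simp add: E_def)
  have "\<bar>v k1 - E * a\<bar> \<le> \<tau>"
    using approx[OF k1K] by (simp add: E_def a_def)
  then have "63/128 \<le> E * \<bar>a\<bar>"
    using abs_bounds_of_abs_diff_le(1)[of "v k1" E a \<tau>] E k1_large \<tau> by linarith
  then have a: "9 * (1 / (32 * E)) \<le> \<bar>a\<bar>"
    using E by (simp add: field_simps)
  define J where "J = {j \<in> {1..m}. 1 / (32 * E) \<le> \<bar>a - \<beta> * real j\<bar>}"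
  show ?thesis
  proof (rule that[of "(\<lambda>j. k1 - j) ` J"])
    show "(\<lambda>j. k1 - j) ` J \<subseteq> {..<K}"
      using mk1 k1K by (auto simp: J_def)
    have "inj_on (\<lambda>j. k1 - j) J"
      using mk1 by (auto simp: inj_on_def J_def)
    then show "3/4 * real m - 1 \<le> real (card ((\<lambda>j. k1 - j) ` J))"
      using card_affine_large_ge[of "1 / (32 * E)" a m \<beta>] a E by (simp add: card_image J_def)
  next
    fix k assume "k \<in> (\<lambda>j. k1 - j) ` J"
    then obtain j where j: "1 \<le> j" "j \<le> m" "k = k1 - j" and aj: "1 / (32 * E) \<le> \<bar>a - \<beta> * real j\<bar>"
      by (auto simp: J_def)
    then have kk1: "k < k1"
      using mk1 by simp
    have "E / 2 \<le> exp (g k)"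
      unfolding E_def using j mk1 k1K \<eta> mult_right_mono[of "real j" "real m" \<eta>]
      by (intro exp_half_le_of_steps[where K = K and g = g, OF step]) auto
    moreover have "\<alpha> + \<beta> * real k = a - \<beta> * real j"
      using j mk1 by (simp add: a_def of_nat_diff algebra_simps)
    ultimately have "E / 2 * (1 / (32 * E)) \<le> exp (g k) * \<bar>\<alpha> + \<beta> * real k\<bar>"
      using aj E by (intro mult_mono) auto
    then have "1/64 \<le> exp (g k) * \<bar>\<alpha> + \<beta> * real k\<bar>"
      using E by simp
    moreover have "\<bar>v k - exp (g k) * (\<alpha> + \<beta> * real k)\<bar> \<le> \<tau>"
      using approx kk1 k1K by simp
    ultimately have "1/128 \<le> \<bar>v k\<bar>"
      using abs_bounds_of_abs_diff_le(2)[of "v k" "exp (g k)"] \<tau> by fastforce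
    then show "1/128 \<le> \<bar>v k\<bar> \<and> \<bar>v k\<bar> \<le> 1/2"
      using before_k1[OF kk1] by simp
  qed
qed

lemma card_mul_sq_le_sum_dist_Z_sq:
  fixes v :: "nat \<Rightarrow> real" and c :: real and S :: "nat set"
  assumes S: "S \<subseteq> {..K}" and c: "0 \<le> c" and bounds: "\<And>k. k \<in> S \<Longrightarrow> c \<le> \<bar>v k\<bar> \<and> \<bar>v k\<bar> \<le> 1/2"
  shows "real (card S) * c\<^sup>2 \<le> (\<Sum>k\<le>K. (dist_Z (v k))\<^sup>2)"
proof -
  have "real (card S) * c\<^sup>2 = (\<Sum>k\<in>S. c\<^sup>2)"
    by simp
  also have "\<dots> \<le> (\<Sum>k\<in>S. (dist_Z (v k))\<^sup>2)"
  proof (rule sum_mono)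
    fix k assume "k \<in> S"
    then have "c \<le> dist_Z (v k)"
      using bounds[of k] abs_le_dist_Z[of "v k"] by auto
    then show "c\<^sup>2 \<le> (dist_Z (v k))\<^sup>2"
      using c by (intro power_mono) auto
  qed
  also have "\<dots> \<le> (\<Sum>k\<le>K. (dist_Z (v k))\<^sup>2)"
    using S by (intro sum_mono2) auto
  finally show ?thesis .
qed

text \<open>Either all points of \<open>R\<close>, where the model is at least \<open>2 \<delta>\<close>, contribute \<open>\<delta>\<^sup>2\<close> each, or the
  sequence exceeds \<open>1/2\<close> somewhere and then passes many moderate values on its way up.\<close>
lemma sum_dist_Z_sq_ge_min:
  fixes v g :: "nat \<Rightarrow> real" and \<alpha> \<beta> \<tau> \<eta> \<delta> :: real and m K :: nat and R :: "nat set"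
  assumes approx: "\<And>k. k \<le> K \<Longrightarrow> \<bar>v k - exp (g k) * (\<alpha> + \<beta> * real k)\<bar> \<le> \<tau>"
    and \<delta>: "\<tau> \<le> \<delta>" "\<delta> \<le> 1/128"
    and step: "\<And>k. k < K \<Longrightarrow> g (Suc k) - g k \<le> \<eta>"
    and \<eta>: "0 \<le> \<eta>" "real m * \<eta> \<le> 1/2"
    and start: "\<And>k. k \<le> m \<Longrightarrow> \<bar>v k\<bar> \<le> 1/4"
    and R: "R \<subseteq> {..K}"
    and large_model: "\<And>k. k \<in> R \<Longrightarrow> 2 * \<delta> \<le> exp (g k) * \<bar>\<alpha> + \<beta> * real k\<bar>"
  shows "min (real (card R) * \<delta>\<^sup>2) ((3/4 * real m - 1) / 128\<^sup>2) \<le> (\<Sum>k\<le>K. (dist_Z (v k))\<^sup>2)"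
proof (cases "\<forall>k\<in>R. \<bar>v k\<bar> \<le> 1/2")
  case True
  have "\<delta> \<le> \<bar>v k\<bar>" if "k \<in> R" for k
  proof -
    have "\<bar>v k - exp (g k) * (\<alpha> + \<beta> * real k)\<bar> \<le> \<tau>"
      using approx that R by auto
    then show ?thesis
      using abs_bounds_of_abs_diff_le(2)[of "v k" "exp (g k)"] large_model[OF that] \<delta> by fastforce
  qed
  moreover have "0 \<le> \<delta>"
    using approx[of 0] \<delta>(1) by (meson abs_ge_zero order_trans le0)
  ultimately have "real (card R) * \<delta>\<^sup>2 \<le> (\<Sum>k\<le>K. (dist_Z (v k))\<^sup>2)"
    using True R by (intro card_mul_sq_le_sum_dist_Z_sq) auto
  then show ?thesis
    by linarith
next
  case False
  then obtain K' where K': "K' \<in> R" "1/2 < \<bar>v K'\<bar>"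
    by auto
  have "\<And>k. k \<le> K' \<Longrightarrow> \<bar>v k - exp (g k) * (\<alpha> + \<beta> * real k)\<bar> \<le> \<tau>"
    and "\<And>k. k < K' \<Longrightarrow> g (Suc k) - g k \<le> \<eta>" and "\<tau> \<le> 1/128"
    using approx step K' R \<delta> by auto
  then obtain G where G: "G \<subseteq> {..<K'}" "3/4 * real m - 1 \<le> real (card G)"
    and moderate: "\<And>k. k \<in> G \<Longrightarrow> 1/128 \<le> \<bar>v k\<bar> \<and> \<bar>v k\<bar> \<le> 1/2"
    using many_moderate_values[of K' v g \<alpha> \<beta> \<tau> \<eta> m] \<eta> start K'(2) by blast
  have "(3/4 * real m - 1) / 128\<^sup>2 \<le> real (card G) * (1/128)\<^sup>2"
    using G(2) by (simp add: field_simps)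
  also have "\<dots> \<le> (\<Sum>k\<le>K. (dist_Z (v k))\<^sup>2)"
  proof (rule card_mul_sq_le_sum_dist_Z_sq)
    show "G \<subseteq> {..K}"
      using G(1) K'(1) R by force
  qed (use moderate in auto)
  finally show ?thesis
    by linarith
qed

lemma affine_large_on_subinterval:
  fixes D D' :: real
  shows "(\<forall>t. 0 \<le> t \<and> t \<le> 3/10 \<longrightarrow> (\<bar>D\<bar> + \<bar>D'\<bar>) / 16 \<le> \<bar>D + D' * t\<bar>) \<or>
         (\<forall>t. 6/10 \<le> t \<and> t \<le> 1 \<longrightarrow> (\<bar>D\<bar> + \<bar>D'\<bar>) / 16 \<le> \<bar>D + D' * t\<bar>)"
proof (cases "\<bar>D'\<bar> \<le> \<bar>D\<bar>")
  case True
  have "(\<bar>D\<bar> + \<bar>D'\<bar>) / 16 \<le> \<bar>D + D' * t\<bar>" if "0 \<le> t" "t \<le> 3/10" for t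
  proof -
    have "\<bar>D' * t\<bar> = \<bar>D'\<bar> * t"
      using that by (simp add: abs_mult)
    also have "\<dots> \<le> \<bar>D'\<bar> * (3/10)"
      using that by (intro mult_left_mono) auto
    finally have "\<bar>D' * t\<bar> \<le> \<bar>D'\<bar> * (3/10)" .
    moreover have "\<bar>D\<bar> \<le> \<bar>D + D' * t\<bar> + \<bar>D' * t\<bar>"
      using abs_triangle_ineq4[of "D + D' * t" "D' * t"] by simp
    ultimately show ?thesis
      using True by argo
  qed
  then show ?thesis
    by blast
next
  case False
  show ?thesis
  proof (rule ccontr)
    assume "\<not> ?thesis"
    then obtain t1 t2 where t: "0 \<le> t1" "t1 \<le> 3/10" "6/10 \<le> t2" "t2 \<le> 1"
      and small: "\<bar>D + D' * t1\<bar> < (\<bar>D\<bar> + \<bar>D'\<bar>) / 16" "\<bar>D + D' * t2\<bar> < (\<bar>D\<bar> + \<bar>D'\<bar>) / 16"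
      by (auto simp: not_le)
    have "\<bar>D'\<bar> * (3/10) \<le> \<bar>D'\<bar> * (t2 - t1)"
      using t by (intro mult_left_mono) auto
    also have "\<dots> = \<bar>D' * (t2 - t1)\<bar>"
      using t by (simp add: abs_mult)
    also have "\<dots> = \<bar>(D + D' * t2) - (D + D' * t1)\<bar>"
      by (simp add: algebra_simps)
    also have "\<dots> \<le> \<bar>D + D' * t2\<bar> + \<bar>D + D' * t1\<bar>"
      by (rule abs_triangle_ineq4)
    finally show False
      using small False by argo
  qed
qed

lemma large_affine_window:
  fixes z e D D' :: real and p :: nat
  assumes z: "200 \<le> z" "z \<le> real p" and e: "0 \<le> e" "e \<le> 1"
  obtains R where "R \<subseteq> {..p}" "z / 8 \<le> real (card R)"
    "\<And>k. k \<in> R \<Longrightarrow> real (p - k) + e \<le> z"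
    "\<And>k. k \<in> R \<Longrightarrow> (\<bar>D\<bar> + \<bar>D'\<bar>) / 16 \<le> \<bar>D + D' * ((real (p - k) + e) / z)\<bar>"
proof -
  note result = that
  have window: thesis
    if "j0 \<le> j1" "j1 \<le> p" "real j1 + 1 \<le> z" "z / 8 \<le> real (j1 - j0) + 1"
      and large: "\<And>d. real j0 \<le> d \<Longrightarrow> d \<le> real j1 + 1 \<Longrightarrow> (\<bar>D\<bar> + \<bar>D'\<bar>) / 16 \<le> \<bar>D + D' * (d / z)\<bar>"
    for j0 j1
  proof (rule result[of "{p - j1..p - j0}"])
    show "z / 8 \<le> real (card {p - j1..p - j0})"
      using \<open>j0 \<le> j1\<close> \<open>j1 \<le> p\<close> \<open>z / 8 \<le> real (j1 - j0) + 1\<close> by (simp add: Suc_diff_le)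
    fix k assume "k \<in> {p - j1..p - j0}"
    then have "real j0 \<le> real (p - k) + e" "real (p - k) + e \<le> real j1 + 1"
      using \<open>j0 \<le> j1\<close> \<open>j1 \<le> p\<close> e by auto
    then show "real (p - k) + e \<le> z" "(\<bar>D\<bar> + \<bar>D'\<bar>) / 16 \<le> \<bar>D + D' * ((real (p - k) + e) / z)\<bar>"
      using \<open>real j1 + 1 \<le> z\<close> large by auto
  qed auto
  define q where "q = nat \<lfloor>z / 8\<rfloor>"
  have q: "z / 8 - 1 < real q" "real q \<le> z / 8"
    using z unfolding q_def by linarith+
  from affine_large_on_subinterval[of D D'] show thesis
  proof
    assume large: "\<forall>t. 0 \<le> t \<and> t \<le> 3/10 \<longrightarrow> (\<bar>D\<bar> + \<bar>D'\<bar>) / 16 \<le> \<bar>D + D' * t\<bar>"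
    show thesis
    proof (rule window[of 0 q])
      fix d assume "real 0 \<le> d" "d \<le> real q + 1"
      then have "0 \<le> d / z" "d / z \<le> 3/10"
        using q z by (simp_all add: divide_le_eq)
      then show "(\<bar>D\<bar> + \<bar>D'\<bar>) / 16 \<le> \<bar>D + D' * (d / z)\<bar>"
        using large by blast
    qed (use q z in auto)
  next
    assume large: "\<forall>t. 6/10 \<le> t \<and> t \<le> 1 \<longrightarrow> (\<bar>D\<bar> + \<bar>D'\<bar>) / 16 \<le> \<bar>D + D' * t\<bar>"
    show thesis
    proof (rule window[of "5 * q" "7 * q"])
      fix d assume "real (5 * q) \<le> d" "d \<le> real (7 * q) + 1"
      then have "6/10 \<le> d / z" "d / z \<le> 1"
        using q z by (simp_all add: divide_le_eq le_divide_eq)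
      then show "(\<bar>D\<bar> + \<bar>D'\<bar>) / 16 \<le> \<bar>D + D' * (d / z)\<bar>"
        using large by blast
    qed (use q z in auto)
  qed
qed

lemma window_sum_lower_bound:
  fixes v g :: "nat \<Rightarrow> real" and z e D D' \<tau> \<eta> \<delta> :: real and p m :: nat
  assumes z: "200 \<le> z" "z \<le> real p" and e: "0 \<le> e" "e \<le> 1"
    and approx: "\<And>k. k \<le> p \<Longrightarrow> \<bar>v k - exp (g k) * (D + D' * ((real (p - k) + e) / z))\<bar> \<le> \<tau>"
    and \<delta>: "\<tau> \<le> \<delta>" "\<delta> \<le> 1/128"
    and step: "\<And>k. k < p \<Longrightarrow> g (Suc k) - g k \<le> \<eta>"
    and \<eta>: "0 \<le> \<eta>" "real m * \<eta> \<le> 1/2"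
    and start: "\<And>k. k \<le> m \<Longrightarrow> \<bar>v k\<bar> \<le> 1/4"
    and near_mode: "\<And>k. k \<le> p \<Longrightarrow> real (p - k) + e \<le> z \<Longrightarrow>
      2 * \<delta> \<le> exp (g k) * ((\<bar>D\<bar> + \<bar>D'\<bar>) / 16)"
  shows "min (z / 8 * \<delta>\<^sup>2) ((3/4 * real m - 1) / 128\<^sup>2) \<le> (\<Sum>k\<le>p. (dist_Z (v k))\<^sup>2)"
proof -
  obtain R where R: "R \<subseteq> {..p}" "z / 8 \<le> real (card R)"
    and near: "\<And>k. k \<in> R \<Longrightarrow> real (p - k) + e \<le> z"
    and large: "\<And>k. k \<in> R \<Longrightarrow> (\<bar>D\<bar> + \<bar>D'\<bar>) / 16 \<le> \<bar>D + D' * ((real (p - k) + e) / z)\<bar>"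
    using large_affine_window[OF z e, of D D'] by blast
  define \<alpha> where "\<alpha> = D + D' * ((real p + e) / z)"
  define \<beta> where "\<beta> = - D' / z"
  have affine: "\<alpha> + \<beta> * real k = D + D' * ((real (p - k) + e) / z)" if "k \<le> p" for k
    using that z by (simp add: \<alpha>_def \<beta>_def of_nat_diff field_simps)
  have "min (real (card R) * \<delta>\<^sup>2) ((3/4 * real m - 1) / 128\<^sup>2) \<le> (\<Sum>k\<le>p. (dist_Z (v k))\<^sup>2)"
  proof (rule sum_dist_Z_sq_ge_min[where g = g and \<alpha> = \<alpha> and \<beta> = \<beta> and \<tau> = \<tau> and \<eta> = \<eta>])
    show "\<bar>v k - exp (g k) * (\<alpha> + \<beta> * real k)\<bar> \<le> \<tau>" if "k \<le> p" for k
      using approx[OF that] affine[OF that] by simp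
    show "2 * \<delta> \<le> exp (g k) * \<bar>\<alpha> + \<beta> * real k\<bar>" if "k \<in> R" for k
    proof -
      have "k \<le> p"
        using R(1) that by auto
      then have "exp (g k) * ((\<bar>D\<bar> + \<bar>D'\<bar>) / 16) \<le> exp (g k) * \<bar>\<alpha> + \<beta> * real k\<bar>"
        using large[OF that] affine[of k] by (intro mult_left_mono) auto
      then show ?thesis
        using near_mode[OF \<open>k \<le> p\<close> near[OF that]] by linarith
    qed
  qed (use \<delta> step \<eta> start R in auto)
  moreover have "min (z / 8 * \<delta>\<^sup>2) ((3/4 * real m - 1) / 128\<^sup>2)
      \<le> min (real (card R) * \<delta>\<^sup>2) ((3/4 * real m - 1) / 128\<^sup>2)"
    using R(2) by (intro min.mono mult_right_mono) auto
  ultimately show ?thesis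
    by linarith
qed

section \<open>The sum along a window next to one of the two points\<close>

definition bc_comb :: "real \<Rightarrow> real \<Rightarrow> real \<Rightarrow> real \<Rightarrow> nat \<Rightarrow> real" where
  "bc_comb N D D' z i = D * bfun N i z + D' * cfun N i z"

lemma bc_comb_eq:
  assumes "0 < z"
  shows "bc_comb N D D' z i = sqrt N * exp (log_weight z i) * (D + D' * ((real i - z\<^sup>2) / z))"
  using assms by (simp add: bc_comb_def cfun_eq_bfun bfun_eq_exp_log_weight algebra_simps)

lemma abs_bc_comb_le:
  assumes "0 < z" "0 \<le> N" "\<bar>real i - z\<^sup>2\<bar> / z \<le> \<Lambda>"
  shows "\<bar>bc_comb N D D' z i\<bar> \<le> sqrt N * exp (log_weight z i) * (\<bar>D\<bar> + \<bar>D'\<bar> * \<Lambda>)"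
proof -
  have "\<bar>D + D' * ((real i - z\<^sup>2) / z)\<bar> \<le> \<bar>D\<bar> + \<bar>D'\<bar> * (\<bar>real i - z\<^sup>2\<bar> / z)"
    using assms(1) abs_triangle_ineq[of D "D' * ((real i - z\<^sup>2) / z)"] by (simp add: abs_mult)
  also have "\<dots> \<le> \<bar>D\<bar> + \<bar>D'\<bar> * \<Lambda>"
    using assms(3) by (intro add_left_mono mult_left_mono) auto
  finally show ?thesis
    using assms by (simp add: bc_comb_eq abs_mult mult_left_mono)
qed

lemma abs_bc_comb_far_le:
  assumes z: "0 < z" and w: "0 < w" and M: "0 \<le> M"
    and side: "(w - z) * (real i - z\<^sup>2) \<le> 0" and i: "real i \<le> 2 * z\<^sup>2"
  shows "\<bar>bc_comb M E E' w i\<bar> \<le> sqrt M * exp (- (z - w)\<^sup>2 / 2) * (\<bar>E\<bar> + \<bar>E'\<bar> * ((2 * z\<^sup>2 + w\<^sup>2) / w))"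
proof -
  have "\<bar>real i - w\<^sup>2\<bar> \<le> real i + w\<^sup>2"
    by (simp add: abs_le_iff)
  then have "\<bar>real i - w\<^sup>2\<bar> / w \<le> (2 * z\<^sup>2 + w\<^sup>2) / w"
    using i w by (intro divide_right_mono) auto
  then have "\<bar>bc_comb M E E' w i\<bar> \<le> sqrt M * exp (log_weight w i) * (\<bar>E\<bar> + \<bar>E'\<bar> * ((2 * z\<^sup>2 + w\<^sup>2) / w))"
    by (rule abs_bc_comb_le[OF w M])
  also have "\<dots> \<le> sqrt M * exp (- (z - w)\<^sup>2 / 2) * (\<bar>E\<bar> + \<bar>E'\<bar> * ((2 * z\<^sup>2 + w\<^sup>2) / w))"
  proof -
    have "log_weight w i \<le> log_weight z i - (w - z)\<^sup>2 / 2"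
      using z w side by (rule log_weight_shift_le)
    then have "log_weight w i \<le> - (z - w)\<^sup>2 / 2"
      using log_weight_nonpos[OF z, of i] by (simp add: power2_commute)
    then show ?thesis
      using M w by (intro mult_right_mono mult_left_mono) auto
  qed
  finally show ?thesis .
qed

text \<open>The window lies below \<open>z\<^sup>2\<close> for \<open>\<sigma> = -1\<close> and above it for \<open>\<sigma> = 1\<close>; its last index \<open>i p\<close> is
  the one nearest to \<open>z\<^sup>2\<close> on that side, at distance \<open>e\<close>.\<close>
lemma window_exists:
  fixes z \<sigma> :: real and p n :: nat
  assumes \<sigma>: "\<sigma> = 1 \<or> \<sigma> = -1" and low: "real p + 1 \<le> z\<^sup>2" and high: "z\<^sup>2 + real p + 1 \<le> real n"
  obtains i e where "0 \<le> e" "e < 1"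
    "\<And>k. k \<le> p \<Longrightarrow> real (i k) = z\<^sup>2 + \<sigma> * (real (p - k) + e)"
    "\<And>k. k \<le> p \<Longrightarrow> i k \<in> {1..n}"
  using \<sigma>
proof
  assume "\<sigma> = 1"
  define c where "c = nat \<lceil>z\<^sup>2\<rceil>"
  have c: "z\<^sup>2 \<le> real c" "real c < z\<^sup>2 + 1"
    unfolding c_def by (simp_all, linarith)
  show thesis
  proof (rule that[of "real c - z\<^sup>2" "\<lambda>k. c + (p - k)"])
    show "real (c + (p - k)) = z\<^sup>2 + \<sigma> * (real (p - k) + (real c - z\<^sup>2))" for k
      using \<open>\<sigma> = 1\<close> by simp
    show "c + (p - k) \<in> {1..n}" if "k \<le> p" for k
      using c low high that by (auto simp: of_nat_diff)
  qed (use c in auto)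
next
  assume "\<sigma> = -1"
  define c where "c = nat \<lfloor>z\<^sup>2\<rfloor>"
  have c: "real c \<le> z\<^sup>2" "z\<^sup>2 < real c + 1"
    unfolding c_def using low by linarith+
  then have "p < c"
    using low by linarith
  show thesis
  proof (rule that[of "z\<^sup>2 - real c" "\<lambda>k. c - (p - k)"])
    show "real (c - (p - k)) = z\<^sup>2 + \<sigma> * (real (p - k) + (z\<^sup>2 - real c))" if "k \<le> p" for k
      using \<open>\<sigma> = -1\<close> \<open>p < c\<close> by (simp add: of_nat_diff)
    show "c - (p - k) \<in> {1..n}" if "k \<le> p" for k
      using c high \<open>p < c\<close> by auto
  qed (use c in auto)
qed

lemma window_inj_adjacent:
  fixes \<sigma> e z :: real and i :: "nat \<Rightarrow> nat"
  assumes \<sigma>: "\<sigma> = 1 \<or> \<sigma> = -1" and pos: "\<And>k. k \<le> p \<Longrightarrow> real (i k) = z\<^sup>2 + \<sigma> * (real (p - k) + e)"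
  shows "inj_on i {..p}" and "\<And>k. k < p \<Longrightarrow> \<bar>real (i (Suc k)) - real (i k)\<bar> = 1"
proof -
  show "inj_on i {..p}"
  proof (rule inj_onI)
    fix k k' assume k: "k \<in> {..p}" "k' \<in> {..p}" and "i k = i k'"
    then have "\<sigma> * real (p - k) = \<sigma> * real (p - k')"
      using pos[of k] pos[of k'] by auto
    then show "k = k'"
      using \<sigma> k by auto
  qed
  show "\<bar>real (i (Suc k)) - real (i k)\<bar> = 1" if "k < p" for k
    using pos[of k] pos[of "Suc k"] that \<sigma> by (auto simp: of_nat_diff algebra_simps)
qed

lemma mode_window_bounds:
  fixes z L :: real
  assumes "200 \<le> z" "1 \<le> L" "8 * L \<le> z"
  shows "z \<le> L * z" "2 \<le> L * z" "6 * (L * z) + 4 \<le> z\<^sup>2"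
proof -
  show "z \<le> L * z"
    using assms mult_right_mono[of 1 L z] by simp
  then show "2 \<le> L * z"
    using assms by linarith
  have "L * z \<le> z\<^sup>2 / 8" "200 * z \<le> z\<^sup>2"
    using assms mult_right_mono[of "8 * L" z z] mult_right_mono[of 200 z z] by (simp_all add: power2_eq_square)
  then show "6 * (L * z) + 4 \<le> z\<^sup>2"
    using assms by linarith
qed

lemma abs_bc_comb_tail_le:
  assumes M: "0 < M" and z: "1 \<le> z" and L: "0 \<le> L" "L * z + 1 \<le> z\<^sup>2"
    and far: "2 * (L * z) + 2 \<le> \<bar>real i - z\<^sup>2\<bar>" and near: "\<bar>real i - z\<^sup>2\<bar> \<le> 3 * (L * z) + 2"
  shows "\<bar>bc_comb M D D' z i\<bar> \<le> sqrt M * exp (- L\<^sup>2 / 4) * (\<bar>D\<bar> + \<bar>D'\<bar> * (3 * L + 2))"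
proof -
  have "\<bar>real i - z\<^sup>2\<bar> / z \<le> 3 * L + 2"
    using near z by (simp add: divide_le_eq algebra_simps)
  then have "\<bar>bc_comb M D D' z i\<bar> \<le> sqrt M * exp (log_weight z i) * (\<bar>D\<bar> + \<bar>D'\<bar> * (3 * L + 2))"
    using z M by (intro abs_bc_comb_le) auto
  also have "\<dots> \<le> sqrt M * exp (- L\<^sup>2 / 4) * (\<bar>D\<bar> + \<bar>D'\<bar> * (3 * L + 2))"
  proof -
    have "log_weight z i \<le> - (L * z)\<^sup>2 / (4 * z\<^sup>2)"
      using z L far mult_nonneg_nonneg[of L z] by (intro log_weight_tail) auto
    also have "\<dots> = - L\<^sup>2 / 4"
      using z by (simp add: power_mult_distrib)
    finally show ?thesis
      using M L by (intro mult_right_mono mult_left_mono) auto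
  qed
  finally show ?thesis .
qed

text \<open>The window has width \<open>3 L z\<close>, i.e. \<open>3 L\<close> standard deviations of the Poisson weights at \<open>z\<close>:
  at its far end these weights are \<open>exp (- L\<^sup>2 / 4)\<close>-small, and across it they vary by at most
  \<open>4 L / z\<close> per step.\<close>
lemma bc_window_sum_lower_bound:
  fixes M z L \<tau> \<eta> \<delta> \<sigma> e D D' :: real and m p :: nat and i :: "nat \<Rightarrow> nat" and u :: "nat \<Rightarrow> real"
  assumes M: "0 < M" and z: "200 \<le> z" and L: "1 \<le> L" "8 * L \<le> z" and m: "real m + 2 \<le> L * z"
    and \<eta>: "4 * L / z \<le> \<eta>" "real m * \<eta> \<le> 1/2"
    and p: "3 * (L * z) \<le> real p" "real p < 3 * (L * z) + 1" and e: "0 \<le> e" "e < 1"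
    and \<sigma>: "\<sigma> = 1 \<or> \<sigma> = -1" and pos: "\<And>k. k \<le> p \<Longrightarrow> real (i k) = z\<^sup>2 + \<sigma> * (real (p - k) + e)"
    and u: "\<And>k. k \<le> p \<Longrightarrow> \<bar>u k\<bar> \<le> \<tau>" and \<delta>: "\<tau> \<le> \<delta>" "\<delta> \<le> 1/128"
    and start: "sqrt M * exp (- L\<^sup>2 / 4) * (\<bar>D\<bar> + \<bar>D'\<bar> * (3 * L + 2)) + \<tau> \<le> 1/4"
    and near_mode: "2 * \<delta> \<le> sqrt M * (exp (-1) / sqrt (2 * z)) * ((\<bar>D\<bar> + \<bar>D'\<bar>) / 16)"
  shows "min (z / 8 * \<delta>\<^sup>2) ((3/4 * real m - 1) / 128\<^sup>2) \<le> (\<Sum>k\<le>p. (dist_Z (bc_comb M D D' z (i k) + u k))\<^sup>2)"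
proof -
  note Lz = mode_window_bounds[OF z L]
  have dist: "\<bar>real (i k) - z\<^sup>2\<bar> = real (p - k) + e" if "k \<le> p" for k
    using \<sigma> pos[OF that] e by (elim disjE) simp_all
  have near: "\<bar>real (i k) - z\<^sup>2\<bar> \<le> 3 * (L * z) + 2" if "k \<le> p" for k
    using dist[OF that] p e by linarith
  define g where "g k = ln (sqrt M) + log_weight z (i k)" for k
  have exp_g: "exp (g k) = sqrt M * exp (log_weight z (i k))" for k
    using M by (simp add: g_def exp_add)
  show ?thesis
  proof (rule window_sum_lower_bound[where g = g and D' = "\<sigma> * D'" and e = e and \<tau> = \<tau> and \<eta> = \<eta>])
    show "z \<le> real p"
      using Lz p by linarith
    show "0 \<le> \<eta>"
      using L z \<eta> order_trans[of 0 "4 * L / z" \<eta>] by simp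
    show "\<bar>bc_comb M D D' z (i k) + u k - exp (g k) * (D + \<sigma> * D' * ((real (p - k) + e) / z))\<bar> \<le> \<tau>"
      if "k \<le> p" for k
      using u[OF that] pos[OF that] z by (simp add: bc_comb_eq exp_g algebra_simps)
    show "g (Suc k) - g k \<le> \<eta>" if "k < p" for k
    proof -
      have "\<bar>g (Suc k) - g k\<bar> \<le> (3 * (L * z) + 2) / z\<^sup>2"
        unfolding g_def using window_inj_adjacent(2)[OF \<sigma> pos that] near[of k] near[of "Suc k"] that Lz z
        by (simp add: abs_log_weight_diff_le_of_adjacent)
      also have "\<dots> \<le> 4 * L / z"
        using Lz z by (simp add: field_simps power2_eq_square)
      finally show ?thesis
        using \<eta> by linarith
    qed
    show "\<bar>bc_comb M D D' z (i k) + u k\<bar> \<le> 1/4" if "k \<le> m" for k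
    proof -
      have "k \<le> p"
        using that m p Lz by linarith
      then have "\<bar>bc_comb M D D' z (i k)\<bar> \<le> sqrt M * exp (- L\<^sup>2 / 4) * (\<bar>D\<bar> + \<bar>D'\<bar> * (3 * L + 2))"
        using M z L Lz near dist[of k] that m p e by (intro abs_bc_comb_tail_le) (auto simp: of_nat_diff)
      then show ?thesis
        using u[of k] \<open>k \<le> p\<close> start abs_triangle_ineq[of "bc_comb M D D' z (i k)" "u k"] by linarith
    qed
    show "2 * \<delta> \<le> exp (g k) * ((\<bar>D\<bar> + \<bar>\<sigma> * D'\<bar>) / 16)" if "k \<le> p" "real (p - k) + e \<le> z" for k
    proof -
      have "1 \<le> i k"
        using near[OF that(1)] Lz by (auto simp: abs_le_iff)
      then have "exp (-1) / sqrt (2 * z) \<le> exp (log_weight z (i k))"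
        using dist[of k] that z by (intro exp_log_weight_near_mode) auto
      then have "sqrt M * (exp (-1) / sqrt (2 * z)) * ((\<bar>D\<bar> + \<bar>D'\<bar>) / 16)
          \<le> sqrt M * exp (log_weight z (i k)) * ((\<bar>D\<bar> + \<bar>D'\<bar>) / 16)"
        using M by (intro mult_right_mono mult_left_mono) auto
      with near_mode have "2 * \<delta> \<le> sqrt M * exp (log_weight z (i k)) * ((\<bar>D\<bar> + \<bar>D'\<bar>) / 16)"
        by (rule order_trans)
      moreover have "\<bar>\<sigma> * D'\<bar> = \<bar>D'\<bar>"
        using \<sigma> by auto
      ultimately show ?thesis
        by (simp only: exp_g)
    qed
  qed (use z e \<delta> \<eta> in auto)
qed

lemma bc_sum_lower_bound:
  fixes M z w D D' E E' L \<tau> \<eta> \<delta> :: real and m n :: nat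
  assumes M: "0 < M" and z: "200 \<le> z" and w: "0 < w" "w \<noteq> z"
    and L: "1 \<le> L" "8 * L \<le> z" and m: "real m + 2 \<le> L * z"
    and \<eta>: "4 * L / z \<le> \<eta>" "real m * \<eta> \<le> 1/2"
    and n: "z\<^sup>2 + 3 * (L * z) + 2 \<le> real n"
    and \<tau>: "sqrt M * exp (- (z - w)\<^sup>2 / 2) * (\<bar>E\<bar> + \<bar>E'\<bar> * ((2 * z\<^sup>2 + w\<^sup>2) / w)) \<le> \<tau>"
    and \<delta>: "\<tau> \<le> \<delta>" "\<delta> \<le> 1/128"
    and start: "sqrt M * exp (- L\<^sup>2 / 4) * (\<bar>D\<bar> + \<bar>D'\<bar> * (3 * L + 2)) + \<tau> \<le> 1/4"
    and near_mode: "2 * \<delta> \<le> sqrt M * (exp (-1) / sqrt (2 * z)) * ((\<bar>D\<bar> + \<bar>D'\<bar>) / 16)"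
  shows "min (z / 8 * \<delta>\<^sup>2) ((3/4 * real m - 1) / 128\<^sup>2)
    \<le> (\<Sum>i=1..n. (dist_Z (bc_comb M D D' z i + bc_comb M E E' w i))\<^sup>2)"
proof -
  define p where "p = nat \<lceil>3 * (L * z)\<rceil>"
  have p: "3 * (L * z) \<le> real p" "real p < 3 * (L * z) + 1"
    using L z unfolding p_def by (simp_all, linarith)
  note Lz = mode_window_bounds[OF z L]
  define \<sigma> where "\<sigma> = sgn (z - w)"
  have \<sigma>: "\<sigma> = 1 \<or> \<sigma> = -1"
    using w by (auto simp: \<sigma>_def sgn_if)
  obtain i e where e: "0 \<le> e" "e < 1"
    and pos: "\<And>k. k \<le> p \<Longrightarrow> real (i k) = z\<^sup>2 + \<sigma> * (real (p - k) + e)"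
    and range: "\<And>k. k \<le> p \<Longrightarrow> i k \<in> {1..n}"
  proof (rule window_exists[OF \<sigma>])
    show "real p + 1 \<le> z\<^sup>2" "z\<^sup>2 + real p + 1 \<le> real n"
      using p Lz n by linarith+
  qed blast
  have far_small: "\<bar>bc_comb M E E' w (i k)\<bar> \<le> \<tau>" if "k \<le> p" for k
  proof -
    have "(w - z) * (real (i k) - z\<^sup>2) = - \<bar>z - w\<bar> * (real (p - k) + e)"
      using pos[OF that] by (simp add: \<sigma>_def sgn_if abs_if algebra_simps)
    also have "\<dots> \<le> 0"
      using e by (simp add: mult_nonneg_nonneg)
    finally have "(w - z) * (real (i k) - z\<^sup>2) \<le> 0" .
    moreover have "real (i k) \<le> 2 * z\<^sup>2"
      using pos[OF that] \<sigma> p e Lz by auto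
    ultimately show ?thesis
      using abs_bc_comb_far_le[of z w M "i k" E E'] z w M \<tau> by simp
  qed
  have "min (z / 8 * \<delta>\<^sup>2) ((3/4 * real m - 1) / 128\<^sup>2)
      \<le> (\<Sum>k\<le>p. (dist_Z (bc_comb M D D' z (i k) + bc_comb M E E' w (i k)))\<^sup>2)"
    using M z L m \<eta> p e \<sigma> pos far_small \<delta> start near_mode by (rule bc_window_sum_lower_bound)
  also have "\<dots> = (\<Sum>j\<in>i ` {..p}. (dist_Z (bc_comb M D D' z j + bc_comb M E E' w j))\<^sup>2)"
    using window_inj_adjacent(1)[OF \<sigma> pos] by (simp add: sum.reindex)
  also have "\<dots> \<le> (\<Sum>j=1..n. (dist_Z (bc_comb M D D' z j + bc_comb M E E' w j))\<^sup>2)"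
    using range by (intro sum_mono2) auto
  finally show ?thesis .
qed

section \<open>Choice of the parameters\<close>

text \<open>The finitely many conditions behind ``for \<open>N\<close> sufficiently large''. \<open>M powr (1/4)\<close> plays the
  role of \<open>L\<close>, \<open>M powr (A/2)\<close> bounds the coefficients, and \<open>m = 32768 C ln M\<close> is chosen so that
  \<open>(3/4 m - 1) / 128\<^sup>2 > C ln M\<close>.\<close>
definition admissible_scale :: "real \<Rightarrow> real \<Rightarrow> real \<Rightarrow> real \<Rightarrow> real \<Rightarrow> real \<Rightarrow> real \<Rightarrow> bool" where
  "admissible_scale A C \<epsilon> c1 c2 \<delta> M \<longleftrightarrow>
    200 \<le> c1 * M \<and> 1 \<le> M powr (1/4) \<and> 8 * M powr (1/4) \<le> c1 * M \<and>
    3 * M powr (1/4) \<le> 2 * M \<and> 2 \<le> M \<and>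
    32768 * (C * ln M) + 3 \<le> M powr (1/4) * (c1 * M) \<and>
    (32768 * (C * ln M) + 1) * (4 * M powr (1/4) / (c1 * M)) \<le> 1/2 \<and>
    sqrt M * exp (- (M powr (2 * \<epsilon>)) / 2) * (M powr (A/2) * (1 + 3 * c2\<^sup>2 * M / c1)) \<le> \<delta> \<and>
    sqrt M * exp (- sqrt M / 4) * (M powr (A/2) * (3 + 3 * M powr (1/4))) \<le> 1/8 \<and>
    C * ln M < c1 * M / 8 * \<delta>\<^sup>2 \<and> 1 < 8192 * (C * ln M)"

lemma eventually_admissible_scale:
  fixes A C \<epsilon> c1 c2 \<delta> :: real
  assumes "0 < C" "0 < \<epsilon>" "0 < c1" "0 < \<delta>"
  shows "eventually (admissible_scale A C \<epsilon> c1 c2 \<delta>) at_top"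
  unfolding admissible_scale_def using assms by (intro eventually_conj; real_asymp)

lemma cross_term_le:
  fixes c1 c2 M z w W E E' \<epsilon> :: real
  assumes c1: "0 < c1" and M: "0 < M" and w: "c1 * M \<le> w" "w \<le> c2 * M" and z: "0 \<le> z" "z \<le> c2 * M"
    and zw: "M powr \<epsilon> \<le> \<bar>z - w\<bar>" and W: "\<bar>E\<bar> \<le> W" "\<bar>E'\<bar> \<le> W"
  shows "sqrt M * exp (- (z - w)\<^sup>2 / 2) * (\<bar>E\<bar> + \<bar>E'\<bar> * ((2 * z\<^sup>2 + w\<^sup>2) / w))
    \<le> sqrt M * exp (- (M powr (2 * \<epsilon>)) / 2) * (W * (1 + 3 * c2\<^sup>2 * M / c1))"
proof -
  have w0: "0 < w"
    using c1 M w mult_pos_pos[of c1 M] by linarith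
  then have "z\<^sup>2 \<le> (c2 * M)\<^sup>2" "w\<^sup>2 \<le> (c2 * M)\<^sup>2"
    using z w by (intro power_mono; simp)+
  then have "(2 * z\<^sup>2 + w\<^sup>2) / w \<le> 3 * (c2 * M)\<^sup>2 / (c1 * M)"
    using w c1 M by (intro frac_le) auto
  also have "\<dots> = 3 * c2\<^sup>2 * M / c1"
    using c1 M by (simp add: field_simps power2_eq_square)
  finally have "\<bar>E'\<bar> * ((2 * z\<^sup>2 + w\<^sup>2) / w) \<le> W * (3 * c2\<^sup>2 * M / c1)"
    using W(2) w0 by (intro mult_mono) auto
  then have "\<bar>E\<bar> + \<bar>E'\<bar> * ((2 * z\<^sup>2 + w\<^sup>2) / w) \<le> W * (1 + 3 * c2\<^sup>2 * M / c1)"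
    using W(1) unfolding distrib_left by linarith
  moreover have "M powr (2 * \<epsilon>) \<le> (z - w)\<^sup>2"
    using zw M power_mono[of "M powr \<epsilon>" "\<bar>z - w\<bar>" 2] by (simp add: power2_eq_square powr_add[symmetric])
  ultimately show ?thesis
    using M w0 by (intro mult_mono mult_left_mono) auto
qed

lemma crossing_steps_bounds:
  fixes x \<eta> \<zeta> :: real
  assumes \<eta>: "0 \<le> \<eta>" and x: "32768 * x + 3 \<le> \<zeta>" "(32768 * x + 1) * \<eta> \<le> 1/2" "1 < 8192 * x"
  shows "real (nat \<lceil>32768 * x\<rceil>) + 2 \<le> \<zeta>" "real (nat \<lceil>32768 * x\<rceil>) * \<eta> \<le> 1/2"
    "x < (3/4 * real (nat \<lceil>32768 * x\<rceil>) - 1) / 128\<^sup>2"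
proof -
  have "real (nat \<lceil>32768 * x\<rceil>) = of_int \<lceil>32768 * x\<rceil>"
    using x(3) by simp
  then have m: "32768 * x \<le> real (nat \<lceil>32768 * x\<rceil>)" "real (nat \<lceil>32768 * x\<rceil>) \<le> 32768 * x + 1"
    using le_of_int_ceiling of_int_ceiling_le_add_one by simp_all
  then show "real (nat \<lceil>32768 * x\<rceil>) + 2 \<le> \<zeta>"
    using x by linarith
  have "16384 * x < 3/4 * real (nat \<lceil>32768 * x\<rceil>) - 1"
    using m x by linarith
  then show "x < (3/4 * real (nat \<lceil>32768 * x\<rceil>) - 1) / 128\<^sup>2"
    by (simp add: field_simps)
  show "real (nat \<lceil>32768 * x\<rceil>) * \<eta> \<le> 1/2"
    using mult_right_mono[OF m(2) \<eta>] x by linarith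
qed

lemma window_end_le_sq:
  fixes z L M c2 :: real
  assumes "0 \<le> z" "z \<le> c2 * M" "3 * L \<le> 2 * M" "2 \<le> M"
  shows "z\<^sup>2 + 3 * (L * z) + 2 \<le> (c2 * M + M)\<^sup>2"
proof -
  have "3 * L * z \<le> 2 * M * z" "2 \<le> M * M"
    using assms mult_mono[of 2 M 1 M] by (auto intro!: mult_right_mono)
  then have "z\<^sup>2 + 3 * (L * z) + 2 \<le> (z + M)\<^sup>2"
    by (simp add: power2_eq_square algebra_simps)
  also have "\<dots> \<le> (c2 * M + M)\<^sup>2"
    using assms by (intro power_mono) auto
  finally show ?thesis .
qed

lemma near_mode_weight_ge:
  fixes M z c2 r D D' :: real
  assumes M: "0 < M" and z: "0 < z" "z \<le> c2 * M" and D: "r / 2 \<le> \<bar>D\<bar> + \<bar>D'\<bar>" and r: "0 < r"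
  shows "exp (-1) * r / (32 * sqrt (2 * c2)) \<le> sqrt M * (exp (-1) / sqrt (2 * z)) * ((\<bar>D\<bar> + \<bar>D'\<bar>) / 16)"
proof -
  have "0 < c2 * M"
    using z by linarith
  then have c2: "0 < c2"
    using M by (simp add: zero_less_mult_iff)
  have "sqrt (2 * z) \<le> sqrt (2 * c2) * sqrt M"
    using z by (simp add: real_sqrt_mult[symmetric] mult.assoc)
  then have "exp (-1) / sqrt (2 * c2) \<le> sqrt M * (exp (-1) / sqrt (2 * z))"
    using z M c2 by (simp add: field_simps)
  then have "exp (-1) / sqrt (2 * c2) * (r / 2 / 16) \<le> sqrt M * (exp (-1) / sqrt (2 * z)) * ((\<bar>D\<bar> + \<bar>D'\<bar>) / 16)"
    using D r M z by (intro mult_mono) auto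
  then show ?thesis
    by (simp add: field_simps)
qed

lemma bc_sum_gt_at_admissible_scale:
  fixes A C \<epsilon> r c1 c2 M z w D D' E E' :: real and n :: nat
  defines "\<delta> \<equiv> min (1/128) (exp (-1) * r / (64 * sqrt (2 * c2)))"
  assumes scale: "admissible_scale A C \<epsilon> c1 c2 \<delta> M"
    and C: "0 < C" and r: "0 < r" and c: "0 < c1"
    and zw: "c1 * M \<le> z" "z \<le> c2 * M" "c1 * M \<le> w" "w \<le> c2 * M" "M powr \<epsilon> \<le> \<bar>z - w\<bar>"
    and n: "(c2 * M + M)\<^sup>2 \<le> real n"
    and D: "r / 2 \<le> \<bar>D\<bar> + \<bar>D'\<bar>"
    and W: "\<bar>D\<bar> \<le> M powr (A/2)" "\<bar>D'\<bar> \<le> M powr (A/2)" "\<bar>E\<bar> \<le> M powr (A/2)" "\<bar>E'\<bar> \<le> M powr (A/2)"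
  shows "C * ln M < (\<Sum>i=1..n. (dist_Z (bc_comb M D D' z i + bc_comb M E E' w i))\<^sup>2)"
proof -
  define L where "L = M powr (1/4)"
  define W where "W = M powr (A/2)"
  define m where "m = nat \<lceil>32768 * (C * ln M)\<rceil>"
  define \<eta> where "\<eta> = 4 * L / (c1 * M)"
  define \<tau> where "\<tau> = sqrt M * exp (- (M powr (2 * \<epsilon>)) / 2) * (W * (1 + 3 * c2\<^sup>2 * M / c1))"
  have scale: "200 \<le> c1 * M" "1 \<le> L" "8 * L \<le> c1 * M" "3 * L \<le> 2 * M" "2 \<le> M"
    "32768 * (C * ln M) + 3 \<le> L * (c1 * M)" "(32768 * (C * ln M) + 1) * \<eta> \<le> 1/2" "\<tau> \<le> \<delta>"
    "sqrt M * exp (- sqrt M / 4) * (W * (3 + 3 * L)) \<le> 1/8"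
    "C * ln M < c1 * M / 8 * \<delta>\<^sup>2" "1 < 8192 * (C * ln M)"
    using scale unfolding admissible_scale_def L_def W_def \<eta>_def \<tau>_def by blast+
  have M: "0 < M" "L\<^sup>2 = sqrt M"
    using scale by (auto simp: L_def powr_half_sqrt[symmetric] power2_eq_square simp flip: powr_add)
  have "0 \<le> \<eta>"
    using scale c M by (simp add: \<eta>_def)
  note m = crossing_steps_bounds[OF this scale(6,7,11), folded m_def]
  have "min (z / 8 * \<delta>\<^sup>2) ((3/4 * real m - 1) / 128\<^sup>2)
      \<le> (\<Sum>i=1..n. (dist_Z (bc_comb M D D' z i + bc_comb M E E' w i))\<^sup>2)"
  proof (rule bc_sum_lower_bound[where L = L and \<tau> = \<tau> and \<eta> = \<eta>])
    show "0 < M" "200 \<le> z" "0 < w" "w \<noteq> z" "1 \<le> L" "8 * L \<le> z" "\<tau> \<le> \<delta>" "\<delta> \<le> 1/128"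
      using M zw scale c by (auto simp: \<delta>_def)
    show "real m + 2 \<le> L * z" "real m * \<eta> \<le> 1/2"
      using m(1,2) scale zw mult_left_mono[of "c1 * M" z L] by linarith+
    show "4 * L / z \<le> \<eta>"
      unfolding \<eta>_def using zw scale c M by (intro divide_left_mono) (auto intro!: mult_pos_pos)
    show "z\<^sup>2 + 3 * (L * z) + 2 \<le> real n"
      using window_end_le_sq[of z c2 M L] zw scale c M n by simp
    show "sqrt M * exp (- (z - w)\<^sup>2 / 2) * (\<bar>E\<bar> + \<bar>E'\<bar> * ((2 * z\<^sup>2 + w\<^sup>2) / w)) \<le> \<tau>"
      unfolding \<tau>_def using W zw scale c M by (intro cross_term_le) (auto simp: W_def)
    have "\<bar>D\<bar> + \<bar>D'\<bar> * (3 * L + 2) \<le> W * (3 + 3 * L)"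
      using W scale mult_right_mono[of "\<bar>D'\<bar>" W "3 * L + 2"] by (simp add: W_def algebra_simps)
    then have "sqrt M * exp (- L\<^sup>2 / 4) * (\<bar>D\<bar> + \<bar>D'\<bar> * (3 * L + 2))
        \<le> sqrt M * exp (- sqrt M / 4) * (W * (3 + 3 * L))"
      using M unfolding M(2) by (intro mult_left_mono) auto
    moreover have "\<delta> \<le> 1/128"
      by (simp add: \<delta>_def)
    ultimately show "sqrt M * exp (- L\<^sup>2 / 4) * (\<bar>D\<bar> + \<bar>D'\<bar> * (3 * L + 2)) + \<tau> \<le> 1/4"
      using scale by linarith
    show "2 * \<delta> \<le> sqrt M * (exp (-1) / sqrt (2 * z)) * ((\<bar>D\<bar> + \<bar>D'\<bar>) / 16)"
      using near_mode_weight_ge[of M z c2 r D D'] M zw scale c D r by (simp add: \<delta>_def)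
  qed
  moreover have "c1 * M / 8 * \<delta>\<^sup>2 \<le> z / 8 * \<delta>\<^sup>2"
    using zw by (intro mult_right_mono) auto
  ultimately show ?thesis
    using m(3) scale by linarith
qed

lemma half_le_abs_add_or_abs_add:
  fixes a b c d r :: real
  assumes "r\<^sup>2 \<le> a\<^sup>2 + b\<^sup>2 + c\<^sup>2 + d\<^sup>2" "0 \<le> r"
  shows "r / 2 \<le> \<bar>a\<bar> + \<bar>b\<bar> \<or> r / 2 \<le> \<bar>c\<bar> + \<bar>d\<bar>"
proof (rule ccontr)
  assume "\<not> ?thesis"
  then have "(\<bar>a\<bar> + \<bar>b\<bar>)\<^sup>2 < r\<^sup>2 / 4" "(\<bar>c\<bar> + \<bar>d\<bar>)\<^sup>2 < r\<^sup>2 / 4"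
    using power_strict_mono[of "\<bar>a\<bar> + \<bar>b\<bar>" "r / 2" 2] power_strict_mono[of "\<bar>c\<bar> + \<bar>d\<bar>" "r / 2" 2]
    by (simp_all add: power_divide)
  moreover have "a\<^sup>2 + b\<^sup>2 + c\<^sup>2 + d\<^sup>2 \<le> (\<bar>a\<bar> + \<bar>b\<bar>)\<^sup>2 + (\<bar>c\<bar> + \<bar>d\<bar>)\<^sup>2"
    by (simp add: power2_eq_square algebra_simps abs_mult[symmetric])
  ultimately show False
    using assms zero_le_power2[of r] by linarith
qed

lemma abs_le_of_sum_squares_le:
  fixes a b c d W :: real
  assumes "a\<^sup>2 + b\<^sup>2 + c\<^sup>2 + d\<^sup>2 \<le> W\<^sup>2" "0 \<le> W"
  shows "\<bar>a\<bar> \<le> W" "\<bar>b\<bar> \<le> W" "\<bar>c\<bar> \<le> W" "\<bar>d\<bar> \<le> W"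
proof -
  have "a\<^sup>2 \<le> W\<^sup>2" "b\<^sup>2 \<le> W\<^sup>2" "c\<^sup>2 \<le> W\<^sup>2" "d\<^sup>2 \<le> W\<^sup>2"
    using assms(1) zero_le_power2[of a] zero_le_power2[of b] zero_le_power2[of c] zero_le_power2[of d]
    by linarith+
  then show "\<bar>a\<bar> \<le> W" "\<bar>b\<bar> \<le> W" "\<bar>c\<bar> \<le> W" "\<bar>d\<bar> \<le> W"
    using assms(2) by (metis abs_le_square_iff abs_of_nonneg)+
qed

lemma sum_dist_Z_sq_gt:
  fixes A C \<epsilon> r c1 c2 M x y D1 D2 D3 D4 :: real and n :: nat
  assumes scale: "admissible_scale A C \<epsilon> c1 c2 (min (1/128) (exp (-1) * r / (64 * sqrt (2 * c2)))) M"
    and C: "0 < C" and r: "0 < r" and c: "0 < c1"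
    and n: "c2 * M \<le> sqrt (real n) - M"
    and xy: "c1 * M \<le> x" "x < y" "y \<le> c2 * M" "M powr \<epsilon> \<le> \<bar>x - y\<bar>"
    and D: "r\<^sup>2 \<le> D1\<^sup>2 + D2\<^sup>2 + D3\<^sup>2 + D4\<^sup>2" "D1\<^sup>2 + D2\<^sup>2 + D3\<^sup>2 + D4\<^sup>2 \<le> M powr A"
  shows "C * ln M < (\<Sum>i=1..n. (dist_Z (D1 * bfun M i x + D2 * cfun M i x + D3 * bfun M i y + D4 * cfun M i y))\<^sup>2)"
proof -
  have "2 \<le> M"
    using scale by (simp add: admissible_scale_def)
  then have "D1\<^sup>2 + D2\<^sup>2 + D3\<^sup>2 + D4\<^sup>2 \<le> (M powr (A/2))\<^sup>2"
    using D(2) by (simp add: power2_eq_square flip: powr_add)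
  from abs_le_of_sum_squares_le[OF this] have coeffs:
    "\<bar>D1\<bar> \<le> M powr (A/2)" "\<bar>D2\<bar> \<le> M powr (A/2)" "\<bar>D3\<bar> \<le> M powr (A/2)" "\<bar>D4\<bar> \<le> M powr (A/2)"
    by simp_all
  have "0 < c1 * M"
    using c \<open>2 \<le> M\<close> by simp
  then have "(c2 * M + M)\<^sup>2 \<le> (sqrt (real n))\<^sup>2"
    using n xy \<open>2 \<le> M\<close> by (intro power_mono) auto
  then have n: "(c2 * M + M)\<^sup>2 \<le> real n"
    by simp
  note bound = bc_sum_gt_at_admissible_scale[OF scale C r c]
  from half_le_abs_add_or_abs_add[OF D(1) less_imp_le[OF r]]
  have "C * ln M < (\<Sum>i=1..n. (dist_Z (bc_comb M D1 D2 x i + bc_comb M D3 D4 y i))\<^sup>2)"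
  proof
    assume "r / 2 \<le> \<bar>D1\<bar> + \<bar>D2\<bar>"
    show ?thesis
      by (rule bound) (use \<open>r / 2 \<le> _\<close> xy coeffs n in auto)
  next
    assume "r / 2 \<le> \<bar>D3\<bar> + \<bar>D4\<bar>"
    have "C * ln M < (\<Sum>i=1..n. (dist_Z (bc_comb M D3 D4 y i + bc_comb M D1 D2 x i))\<^sup>2)"
      by (rule bound) (use \<open>r / 2 \<le> _\<close> xy coeffs n in \<open>auto simp: abs_minus_commute\<close>)
    then show ?thesis
      by (simp add: add.commute)
  qed
  then show ?thesis
    by (simp add: bc_comb_def add.assoc)
qed

text \<open>Not used: \<open>A > 0\<close> and \<open>eps_g < 1/2\<close>, since \<open>exp (- M powr (2 * eps_g) / 2)\<close> beats every
  power of \<open>M\<close>, and \<open>c1 < c2\<close>, which follows from \<open>x < y\<close>.\<close>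
theorem theorem3p17:
  fixes A C eps_g r c1 c2 :: real
  assumes "A > 0" "C > 0" "eps_g > 0" "eps_g < 1/2" "r > 0" "0 < c1" "c1 < c2"
  shows "\<exists>N0. \<forall>M::real. \<forall>n::nat. M \<ge> N0 \<longrightarrow> c2 * M \<le> sqrt (real n) - M \<longrightarrow>
    (\<forall>x y. c1 * M \<le> x \<longrightarrow> x < y \<longrightarrow> y \<le> c2 * M \<longrightarrow> \<bar>x - y\<bar> \<ge> M powr eps_g \<longrightarrow>
      \<not> (\<exists>D1 D2 D3 D4 :: real.
            r^2 \<le> D1^2 + D2^2 + D3^2 + D4^2 \<and> D1^2 + D2^2 + D3^2 + D4^2 \<le> M powr A \<and>
            (\<Sum>i=1..n. (dist_Z (D1 * bfun M i x + D2 * cfun M i x + D3 * bfun M i y + D4 * cfun M i y))^2)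
              \<le> C * ln M))"
proof -
  define \<delta> where "\<delta> = min (1/128) (exp (-1) * r / (64 * sqrt (2 * c2)))"
  have "0 < \<delta>"
    using assms by (simp add: \<delta>_def)
  then obtain N0 where N0: "\<And>M. N0 \<le> M \<Longrightarrow> admissible_scale A C eps_g c1 c2 \<delta> M"
    using eventually_admissible_scale[of C eps_g c1 \<delta> A c2] assms by (auto simp: eventually_at_top_linorder)
  show ?thesis
  proof (intro exI[of _ N0] allI impI notI)
    fix M x y :: real and n :: nat
    assume "N0 \<le> M" "c2 * M \<le> sqrt (real n) - M" "c1 * M \<le> x" "x < y" "y \<le> c2 * M" "M powr eps_g \<le> \<bar>x - y\<bar>"
    note bound = sum_dist_Z_sq_gt[OF N0[OF this(1), unfolded \<delta>_def] _ _ _ this(2-)]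
    assume "\<exists>D1 D2 D3 D4. r^2 \<le> D1^2 + D2^2 + D3^2 + D4^2 \<and> D1^2 + D2^2 + D3^2 + D4^2 \<le> M powr A \<and>
        (\<Sum>i=1..n. (dist_Z (D1 * bfun M i x + D2 * cfun M i x + D3 * bfun M i y + D4 * cfun M i y))^2) \<le> C * ln M"
    then show False
      using bound assms by (meson not_le)
  qed
qed

end
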